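(* Every function $f\in\Omega$ is starlike (and univalent) in $\Delta$; that is, $\operatorname{Re}\{zf'(z)/f(z)\}>0$ for all $z\in\Delta$.
   Context: $\Delta=\{z\in\mathbb{C}:|z|<1\}$. $\mathcal{A}$ is the class of functions $f$ analytic in $\Delta$ with $f(0)=0$, $f'(0)=1$, i.e. $f(z)=z+\sum_{n\ge2}a_nz^n$. $\Omega$ is the class of $f\in\mathcal{A}$ with $|zf'(z)-f(z)|<\tfrac12$ for all $z\in\Delta$. *)

theory Defs
  imports "HOL-Complex_Analysis.Complex_Analysis"
begin

abbreviation unit_disc :: "complex set" where
  "unit_disc \<equiv> ball 0 1"

definition classA :: "(complex \<Rightarrow> complex) set" where
  "classA = {f. f holomorphic_on unit_disc \<and> f 0 = 0 \<and> deriv f 0 = 1}"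

definition classOmega :: "(complex \<Rightarrow> complex) set" where
  "classOmega = {f \<in> classA. \<forall>z\<in>unit_disc. norm (z * deriv f z - f z) < 1/2}"

end

theory Submission
  imports Defs
begin

text \<open>
  For \<open>f \<in> \<Omega>\<close> the function \<open>g(z) = z f'(z) - f(z)\<close> satisfies \<open>g(0) = g'(0) = 0\<close> (indeed
  \<open>g'(z) = z f''(z)\<close>) and \<open>\<bar>2g\<bar> < 1\<close>, so a Schwarz lemma for double zeros gives
  \<open>\<bar>g(z)\<bar> \<le> \<bar>z\<bar>\<^sup>2/2\<close>. Writing \<open>f(z) = z P(z)\<close> we have \<open>g = z\<^sup>2 P'\<close>, hence \<open>\<bar>P'\<bar> \<le> 1/2\<close> and
  \<open>\<bar>f(z) - z\<bar> \<le> \<bar>z\<bar>\<^sup>2/2\<close>. Then \<open>z f'/f = 1 + g/f\<close> with \<open>\<bar>g\<bar> \<le> \<bar>z\<bar>\<^sup>2/2 < \<bar>z\<bar> - \<bar>z\<bar>\<^sup>2/2 \<le> \<bar>f\<bar>\<close>,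
  which gives starlikeness; and \<open>z (f' - 1) = g + (f - z)\<close> gives \<open>\<bar>f'(z) - 1\<bar> \<le> \<bar>z\<bar>\<close>, so \<open>f - id\<close>
  is a contraction on every smaller disc and \<open>f\<close> is injective.
\<close>

lemma Schwarz_Lemma_double_zero:
  assumes holh: "h holomorphic_on ball 0 1" and h0: "h 0 = 0" and dh0: "deriv h 0 = 0"
    and bound: "\<And>z. norm z < 1 \<Longrightarrow> norm (h z) < 1" and \<xi>: "norm \<xi> < 1"
  shows "norm (h \<xi>) \<le> norm \<xi> ^ 2"
proof -
  obtain H where holH: "H holomorphic_on ball 0 1" and h_eq: "\<And>z. norm z < 1 \<Longrightarrow> h z = z * H z"
    and "deriv h 0 = H 0"
    using Schwarz3 [OF holh h0] by blast
  with dh0 have H0: "H 0 = 0" by simp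
  have H_le: "norm (H z) \<le> 1" if z: "norm z < 1" for z
  proof (cases "z = 0")
    case False
    have "norm z * norm (H z) \<le> norm z * 1"
      using Schwarz_Lemma(1) [OF holh h0 bound z] h_eq [OF z] by (simp add: norm_mult)
    with False show ?thesis by simp
  qed (simp add: H0)
  have H_lt: "norm (H z) < 1" if z: "norm z < 1" for z
  proof (rule ccontr)
    assume "\<not> norm (H z) < 1"
    with H_le [OF z] have max: "norm (H z) = 1" by simp
    have "H constant_on ball 0 1"
    proof (rule Schwarz2 [OF holH])
      show "ball z (1 - norm z) \<subseteq> ball 0 1"
      proof
        fix w assume "w \<in> ball z (1 - norm z)"
        then show "w \<in> ball 0 1"
          using norm_triangle_ineq2 [of w z] by (simp add: dist_norm norm_minus_commute)
      qed
      show "norm (H w) \<le> norm (H z)" if "norm (z - w) < 1 - norm z" for w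
        using H_le [of w] max that norm_triangle_ineq2 [of w z]
        by (simp add: norm_minus_commute)
    qed (use z in simp)
    then have "H z = H 0"
      using z by (auto simp: constant_on_def)
    with max H0 show False by simp
  qed
  have "norm \<xi> * norm (H \<xi>) \<le> norm \<xi> * norm \<xi>"
    using Schwarz_Lemma(1) [OF holH H0 H_lt \<xi>] by (simp add: mult_left_mono)
  then show ?thesis
    by (simp add: h_eq [OF \<xi>] norm_mult power2_eq_square)
qed

lemma has_field_derivative_mult_deriv_minus:
  assumes "f holomorphic_on S" "open S" "z \<in> S"
  shows "((\<lambda>w. w * deriv f w - f w) has_field_derivative z * deriv (deriv f) z) (at z)"
proof -
  have "(f has_field_derivative deriv f z) (at z)"
    using holomorphic_derivI [OF assms] .
  moreover have "(deriv f has_field_derivative deriv (deriv f) z) (at z)"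
    using holomorphic_derivI [OF holomorphic_deriv [OF assms(1,2)] assms(2,3)] .
  ultimately show ?thesis
    by (auto intro!: derivative_eq_intros)
qed

lemma classOmega_norm_mult_deriv_minus_le:
  assumes f: "f \<in> classOmega" and z: "norm z < 1"
  shows "norm (z * deriv f z - f z) \<le> norm z ^ 2 / 2"
proof -
  have holf: "f holomorphic_on ball 0 1" and f0: "f 0 = 0"
    and bound: "\<And>w. norm w < 1 \<Longrightarrow> norm (w * deriv f w - f w) < 1/2"
    using f by (auto simp: classOmega_def classA_def)
  define h where "h = (\<lambda>w. 2 * (w * deriv f w - f w))"
  have dh: "(h has_field_derivative 2 * (w * deriv (deriv f) w)) (at w)" if "w \<in> ball 0 1" for w
    unfolding h_def by (intro DERIV_cmult has_field_derivative_mult_deriv_minus [OF holf open_ball that])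
  have holh: "h holomorphic_on ball 0 1"
    using dh holomorphic_on_open field_differentiable_def by blast
  have h0: "h 0 = 0"
    by (simp add: h_def f0)
  have dh0: "deriv h 0 = 0"
    using DERIV_imp_deriv [OF dh [of 0]] by simp
  have h_lt: "norm (h w) < 1" if "norm w < 1" for w
    using bound [OF that] unfolding h_def norm_mult by simp
  have "norm (h z) \<le> norm z ^ 2"
    by (rule Schwarz_Lemma_double_zero [OF holh h0 dh0 h_lt z])
  then show ?thesis unfolding h_def norm_mult by simp
qed

lemma norm_le_if_norm_le_off_point:
  fixes h :: "'a::{perfect_space, t2_space} \<Rightarrow> 'b::real_normed_vector"
  assumes "isCont h a" "open S" "a \<in> S"
    and bound: "\<And>w. w \<in> S \<Longrightarrow> w \<noteq> a \<Longrightarrow> norm (h w) \<le> B" and "x \<in> S"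
  shows "norm (h x) \<le> B"
proof (cases "x = a")
  case True
  have "\<forall>\<^sub>F w in at a. w \<in> S"
    using assms by (intro eventually_at_in_open') auto
  moreover have "\<forall>\<^sub>F w in at a. w \<noteq> a"
    by (simp add: eventually_at_filter)
  ultimately have "\<forall>\<^sub>F w in at a. norm (h w) \<le> B"
    by eventually_elim (use bound in auto)
  with \<open>isCont h a\<close> True show ?thesis
    using Lim_norm_ubound [OF trivial_limit_at] unfolding isCont_def by blast
qed (use assms in auto)

lemma classOmega_norm_minus_ident_le:
  assumes f: "f \<in> classOmega" and z: "norm z < 1"
  shows "norm (f z - z) \<le> norm z ^ 2 / 2"
proof -
  have holf: "f holomorphic_on ball 0 1" and f0: "f 0 = 0" and f'0: "deriv f 0 = 1"
    using f by (auto simp: classOmega_def classA_def)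
  obtain P where holP: "P holomorphic_on ball 0 1" and f_eq: "\<And>w. norm w < 1 \<Longrightarrow> f w = w * P w"
    and "deriv f 0 = P 0"
    using Schwarz3 [OF holf f0] by blast
  with f'0 have P0: "P 0 = 1" by simp
  have dP: "(P has_field_derivative deriv P w) (at w)" if "w \<in> ball 0 1" for w
    using holomorphic_derivI [OF holP open_ball that] .
  have deriv_f: "deriv f w = P w + w * deriv P w" if w: "w \<in> ball 0 1" for w
  proof (rule DERIV_imp_deriv, rule has_field_derivative_transform_within_open [where S = "ball 0 1"])
    show "((\<lambda>w. w * P w) has_field_derivative P w + w * deriv P w) (at w)"
      using dP [OF w] by (auto intro!: derivative_eq_intros)
  qed (use w f_eq in auto)
  have g_eq: "w * deriv f w - f w = w\<^sup>2 * deriv P w" if w: "w \<in> ball 0 1" for w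
    using w by (simp add: deriv_f f_eq power2_eq_square distrib_left)
  have dP_le_off_0: "norm (deriv P w) \<le> 1/2" if w: "w \<in> ball 0 1" "w \<noteq> 0" for w
  proof -
    have "norm w ^ 2 * norm (deriv P w) \<le> norm w ^ 2 * (1/2)"
      using classOmega_norm_mult_deriv_minus_le [OF f, of w] w
      by (simp add: g_eq norm_mult norm_power)
    with w show ?thesis by simp
  qed
  have "isCont (deriv P) 0"
    using holomorphic_on_imp_continuous_on [OF holomorphic_deriv [OF holP open_ball]]
    by (simp add: continuous_on_eq_continuous_at)
  then have dP_le: "norm (deriv P w) \<le> 1/2" if "w \<in> ball 0 1" for w
    by (rule norm_le_if_norm_le_off_point [where S = "ball 0 1"]) (use dP_le_off_0 that in auto)
  have "norm (P z - P 0) \<le> 1/2 * norm (z - 0)"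
  proof (rule field_differentiable_bound [where S = "ball 0 1" and f' = "deriv P"])
    show "(P has_field_derivative deriv P w) (at w within ball 0 1)" if "w \<in> ball 0 1" for w
      using dP [OF that] by (rule has_field_derivative_at_within)
    show "norm (deriv P w) \<le> 1/2" if "w \<in> ball 0 1" for w
      using dP_le that .
  qed (use z in auto)
  moreover have "f z - z = z * (P z - 1)"
    by (simp add: f_eq z right_diff_distrib)
  ultimately show ?thesis
    by (simp add: P0 norm_mult power2_eq_square mult.assoc mult_left_mono)
qed

lemma classOmega_norm_deriv_minus_one_le:
  assumes f: "f \<in> classOmega" and z: "norm z < 1"
  shows "norm (deriv f z - 1) \<le> norm z"
proof (cases "z = 0")
  case True
  with f show ?thesis by (simp add: classOmega_def classA_def)
next
  case False
  have "z * (deriv f z - 1) = (z * deriv f z - f z) + (f z - z)"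
    by (simp add: algebra_simps)
  then have "norm z * norm (deriv f z - 1) \<le> norm (z * deriv f z - f z) + norm (f z - z)"
    by (metis norm_mult norm_triangle_ineq)
  also have "\<dots> \<le> norm z * norm z"
    using classOmega_norm_mult_deriv_minus_le [OF f z] classOmega_norm_minus_ident_le [OF f z]
    by (simp add: power2_eq_square)
  finally show ?thesis
    using False by simp
qed

lemma inj_on_ball_if_norm_deriv_minus_one_le:
  assumes holf: "f holomorphic_on ball 0 1"
    and bound: "\<And>z. norm z < 1 \<Longrightarrow> norm (deriv f z - 1) \<le> norm z"
  shows "inj_on f (ball 0 1)"
proof (rule inj_onI)
  fix a b :: complex
  assume a: "a \<in> ball 0 1" and b: "b \<in> ball 0 1" and eq: "f a = f b"
  define r where "r = max (norm a) (norm b)"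
  have "r < 1" and r_sub: "cball 0 r \<subseteq> ball 0 1"
    using a b by (auto simp: r_def)
  have "norm ((f a - a) - (f b - b)) \<le> r * norm (a - b)"
  proof (rule field_differentiable_bound [where S = "cball 0 r" and f' = "\<lambda>z. deriv f z - 1"])
    show "((\<lambda>z. f z - z) has_field_derivative deriv f z - 1) (at z within cball 0 r)"
      if "z \<in> cball 0 r" for z
    proof -
      have "(f has_field_derivative deriv f z) (at z)"
        using holomorphic_derivI [OF holf open_ball] r_sub that by blast
      then have "((\<lambda>z. f z - z) has_field_derivative deriv f z - 1) (at z)"
        by (intro DERIV_diff DERIV_ident)
      then show ?thesis
        by (rule has_field_derivative_at_within)
    qed
    show "norm (deriv f z - 1) \<le> r" if "z \<in> cball 0 r" for z
    proof -
      have "norm z \<le> r" using that by simp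
      with \<open>r < 1\<close> show ?thesis
        using bound [of z] by simp
    qed
  qed (auto simp: r_def)
  with eq have "norm (a - b) \<le> r * norm (a - b)"
    by (simp add: norm_minus_commute)
  with \<open>r < 1\<close> show "a = b"
    by (metis mult_less_cancel_right2 norm_ge_zero not_le right_minus_eq zero_less_norm_iff)
qed

lemma classOmega_starlike:
  assumes f: "f \<in> classOmega" and z: "norm z < 1" "z \<noteq> 0"
  shows "f z \<noteq> 0 \<and> Re (z * deriv f z / f z) > 0"
proof -
  have "norm (z * deriv f z - f z) \<le> norm z ^ 2 / 2"
    using classOmega_norm_mult_deriv_minus_le [OF f z(1)] .
  also have "\<dots> < norm z - norm z ^ 2 / 2"
    using z by (simp add: power2_eq_square)
  also have "\<dots> \<le> norm (f z)"
    using classOmega_norm_minus_ident_le [OF f z(1)] norm_triangle_ineq3 [of "f z" z]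
    by linarith
  finally have lt: "norm (z * deriv f z - f z) < norm (f z)" .
  then have "f z \<noteq> 0" by auto
  then have "z * deriv f z / f z = 1 + (z * deriv f z - f z) / f z"
    by (simp add: field_simps)
  moreover have "norm ((z * deriv f z - f z) / f z) < 1"
    using lt \<open>f z \<noteq> 0\<close> by (simp add: norm_divide divide_less_eq)
  ultimately show ?thesis
    using \<open>f z \<noteq> 0\<close> abs_Re_le_cmod [of "(z * deriv f z - f z) / f z"] by auto
qed

theorem lemma3p1:
  assumes "f \<in> classOmega"
  shows "inj_on f unit_disc \<and>
         (\<forall>z\<in>unit_disc. z \<noteq> 0 \<longrightarrow> f z \<noteq> 0 \<and> Re (z * deriv f z / f z) > 0)"
proof
  have "f holomorphic_on unit_disc"
    using assms by (simp add: classOmega_def classA_def)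
  then show "inj_on f unit_disc"
    using inj_on_ball_if_norm_deriv_minus_one_le classOmega_norm_deriv_minus_one_le [OF assms]
    by blast
  show "\<forall>z\<in>unit_disc. z \<noteq> 0 \<longrightarrow> f z \<noteq> 0 \<and> Re (z * deriv f z / f z) > 0"
    using classOmega_starlike [OF assms] by simp
qed

end
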